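(* Let $n\ge3$, let $0<r<r_n$, let $v$ be a vertex of $P_n$ and let $p\in P_n$ be arbitrary. Then $d_{P_n}(v,g_r(v))\le d_{P_n}(p,g_r(p))$.
   Context: $P_n$ is the boundary of the regular polygon in $\mathbb{R}^2$ whose vertices are the $n$-th roots of unity (its vertices), with the Euclidean metric $\|x-y\|$. $d_{P_n}(x,y)\in[0,1)$ is the counterclockwise arc length of $P_n$ from $x$ to $y$ divided by the perimeter. The directed Vietoris–Rips graph $\mathrm{VR}_<(P_n;r)$ has vertex set $P_n$ and, for distinct $u,w$ with $\|u-w\|<r$, the edge $u\to w$ if $d_{P_n}(u,w)<d_{P_n}(w,u)$, else $w\to u$; it is cyclic if whenever $u_0\to u_1$, every $w$ strictly counterclockwise-between $u_0,u_1$ has $u_0\to w$ and $w\to u_1$. $r_n=\sup\{r\ge0:\mathrm{VR}_<(P_n;r')\text{ is cyclic for all }0<r'<r\}$. For $0<r<r_n$ and $p\in P_n$, $g_r(p)$ is the first point $w$ met when moving counterclockwise from $p$ along $P_n$ with $\|p-w\|=r$. *)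

theory Defs
  imports "HOL-Analysis.Analysis"
begin

text \<open>The plane is modelled as the complex numbers, with the Euclidean metric
  norm (x - y).  The vertices of P_n are the n-th roots of unity.\<close>

definition poly_vert :: "nat \<Rightarrow> nat \<Rightarrow> complex" where
  "poly_vert n k = cis (2 * pi * real k / real n)"

definition Pn :: "nat \<Rightarrow> complex set" where
  "Pn n = (\<Union>k<n. closed_segment (poly_vert n k) (poly_vert n (Suc k)))"

text \<open>Constant-speed (arc-length proportional) counterclockwise parametrisation of
  P_n by t in [0,1), starting at the vertex 1.  Since all sides have equal length,
  t is the counterclockwise arc length from 1 to poly_pt n t divided by the perimeter.\<close>
definition poly_pt :: "nat \<Rightarrow> real \<Rightarrow> complex" where
  "poly_pt n t = (let k = nat \<lfloor>real n * t\<rfloor>; s = real n * t - of_int \<lfloor>real n * t\<rfloor>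
                  in of_real (1 - s) * poly_vert n k + of_real s * poly_vert n (Suc k))"

definition poly_pos :: "nat \<Rightarrow> complex \<Rightarrow> real" where
  "poly_pos n x = (THE t. t \<in> {0..<1} \<and> poly_pt n t = x)"

text \<open>d_{P_n}(x,y): counterclockwise arc length from x to y divided by the perimeter.\<close>
definition dP :: "nat \<Rightarrow> complex \<Rightarrow> complex \<Rightarrow> real" where
  "dP n x y = frac (poly_pos n y - poly_pos n x)"

text \<open>Edge u \<rightarrow> w of the directed Vietoris--Rips graph VR_<(P_n; r).\<close>
definition vr_edge :: "nat \<Rightarrow> real \<Rightarrow> complex \<Rightarrow> complex \<Rightarrow> bool" where
  "vr_edge n r u w \<longleftrightarrow> u \<in> Pn n \<and> w \<in> Pn n \<and> u \<noteq> w \<and> norm (u - w) < r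
      \<and> dP n u w < dP n w u"

definition ccw_between :: "nat \<Rightarrow> complex \<Rightarrow> complex \<Rightarrow> complex \<Rightarrow> bool" where
  "ccw_between n u0 w u1 \<longleftrightarrow> 0 < dP n u0 w \<and> dP n u0 w < dP n u0 u1"

definition vr_cyclic :: "nat \<Rightarrow> real \<Rightarrow> bool" where
  "vr_cyclic n r \<longleftrightarrow> (\<forall>u0 u1. vr_edge n r u0 u1 \<longrightarrow>
      (\<forall>w\<in>Pn n. ccw_between n u0 w u1 \<longrightarrow> vr_edge n r u0 w \<and> vr_edge n r w u1))"

definition r_crit :: "nat \<Rightarrow> real" where
  "r_crit n = Sup {r. r \<ge> 0 \<and> (\<forall>r'. 0 < r' \<and> r' < r \<longrightarrow> vr_cyclic n r')}"

definition g_map :: "nat \<Rightarrow> real \<Rightarrow> complex \<Rightarrow> complex" where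
  "g_map n r p = (THE w. w \<in> Pn n \<and> norm (p - w) = r \<and>
      (\<forall>w'\<in>Pn n. norm (p - w') = r \<longrightarrow> dP n p w \<le> dP n p w'))"

end

theory Submission
  imports Defs
begin

text \<open>For every arc length \<open>t\<close>, the chord
  from an arbitrary point of \<open>P_n\<close> to the point at arc distance \<open>t\<close> ahead of it is at most
  the chord from a vertex to the point at arc distance \<open>t\<close> ahead: along a side the chord is a
  convex function of the starting point, so it is largest at the ends of the side, where it is
  a chord from a vertex (after a reflection at one of the ends).  So if \<open>g_r(p)\<close> is at arc
  distance \<open>t\<close> from \<open>p\<close>, the point at arc distance \<open>t\<close> from the vertex \<open>v\<close> is at least
  \<open>r\<close> away from \<open>v\<close>, and by the intermediate value theorem \<open>g_r(v)\<close> comes no later.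
  The hypothesis \<open>r < r_n\<close> is only needed for \<open>g_r(p)\<close> to exist (otherwise \<open>g_map\<close> is a
  junk value): an explicit failure of cyclicity bounds \<open>r_n\<close> by the distance from any point
  of \<open>P_n\<close> to a suitable vertex.\<close>

section \<open>Arc-length parametrisation\<close>

lemma poly_vert_add: "poly_vert n (j + k) = poly_vert n j * poly_vert n k"
  by (simp add: poly_vert_def cis_mult add_divide_distrib distrib_left)

lemma norm_poly_vert [simp]: "norm (poly_vert n k) = 1"
  by (simp add: poly_vert_def)

lemma poly_vert_0 [simp]: "poly_vert n 0 = 1"
  by (simp add: poly_vert_def)

lemma poly_vert_mult_self:
  assumes "n > 0"
  shows "poly_vert n (n * m) = 1"
proof -
  have "2 * pi * real (n * m) / real n = 2 * pi * real m" using assms by simp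
  then show ?thesis unfolding poly_vert_def by (simp add: cis_multiple_2pi)
qed

lemma cnj_poly_vert_mult: "cnj (poly_vert n j) * poly_vert n (i + j) = poly_vert n i"
  by (simp add: poly_vert_def cis_cnj cis_mult add_divide_distrib distrib_left)

lemma poly_pt_on_side:
  assumes n: "n > 0" and f: "0 \<le> f" "f \<le> 1"
  shows "poly_pt n ((real K + f) / real n)
           = of_real (1 - f) * poly_vert n K + of_real f * poly_vert n (Suc K)"
proof (cases "f < 1")
  case True
  have "\<lfloor>real K + f\<rfloor> = int K" using f True by (simp add: floor_eq_iff)
  then show ?thesis using n by (simp add: poly_pt_def)
next
  case False
  then have "f = 1" using f by simp
  moreover have "real n * ((real K + 1) / real n) = real (Suc K)" using n by simp
  ultimately show ?thesis unfolding poly_pt_def Let_def by (simp only: floor_of_nat nat_int) simp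
qed

lemma nonneg_param_decomp:
  assumes "n > 0" and "t \<ge> 0"
  obtains K f where "t = (real K + f) / real n" "0 \<le> f" "f < 1"
proof
  show "t = (real (nat \<lfloor>real n * t\<rfloor>) + frac (real n * t)) / real n"
    using assms by (simp add: frac_def)
qed (simp_all add: frac_lt_1)

lemma poly_pt_rotate:
  assumes n: "n > 0" and t: "t \<ge> 0"
  shows "poly_pt n (t + real j / real n) = poly_vert n j * poly_pt n t"
proof -
  obtain K f where tf: "t = (real K + f) / real n" "0 \<le> f" "f < 1"
    using nonneg_param_decomp[OF n t] .
  have "t + real j / real n = (real (j + K) + f) / real n"
    using tf(1) n by (simp add: field_simps)
  then have "poly_pt n (t + real j / real n)
      = of_real (1 - f) * poly_vert n (j + K) + of_real f * poly_vert n (Suc (j + K))"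
    using poly_pt_on_side[OF n tf(2), of "j + K"] tf(3) by (simp only:)
  also have "\<dots> = poly_vert n j * (of_real (1 - f) * poly_vert n K + of_real f * poly_vert n (Suc K))"
    using poly_vert_add[of n j K] poly_vert_add[of n j "Suc K"] by (simp add: algebra_simps)
  also have "\<dots> = poly_vert n j * poly_pt n t"
    using poly_pt_on_side[OF n tf(2)] tf by simp
  finally show ?thesis .
qed

lemma poly_pt_periodic:
  assumes "n > 0" and "t \<ge> 0"
  shows "poly_pt n (t + real m) = poly_pt n t"
  using poly_pt_rotate[OF assms, of "n * m"] poly_vert_mult_self[OF assms(1)] assms(1) by simp

lemma poly_pt_vertex: "n > 0 \<Longrightarrow> poly_pt n (real k / real n) = poly_vert n k"
  using poly_pt_on_side[of n 0 k] by simp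

lemma poly_pt_frac:
  assumes "n > 0" and "t \<ge> 0"
  shows "poly_pt n (frac t) = poly_pt n t"
proof -
  have "t = frac t + real (nat \<lfloor>t\<rfloor>)" using assms(2) by (simp add: frac_def)
  then show ?thesis using poly_pt_periodic[OF assms(1) frac_ge_0] by metis
qed

lemma Pn_eq_poly_pt_image:
  assumes n: "n > 0"
  shows "Pn n = poly_pt n ` {0..<1}"
proof
  show "Pn n \<subseteq> poly_pt n ` {0..<1}"
  proof
    fix x assume "x \<in> Pn n"
    then obtain K u where K: "K < n" "0 \<le> u" "u \<le> 1"
      and x: "x = (1 - u) *\<^sub>R poly_vert n K + u *\<^sub>R poly_vert n (Suc K)"
      unfolding Pn_def closed_segment_def by auto
    define t where "t = (real K + u) / real n"
    have "x = poly_pt n t"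
      using poly_pt_on_side[OF n K(2,3)] x unfolding t_def by (simp add: scaleR_conv_of_real)
    also have "\<dots> = poly_pt n (frac t)" using poly_pt_frac[OF n] K unfolding t_def by simp
    finally show "x \<in> poly_pt n ` {0..<1}" by (simp add: frac_lt_1)
  qed
next
  show "poly_pt n ` {0..<1} \<subseteq> Pn n"
  proof
    fix x assume "x \<in> poly_pt n ` {0..<1}"
    then obtain t where t: "0 \<le> t" "t < 1" and x: "x = poly_pt n t" by auto
    obtain K f where tf: "t = (real K + f) / real n" "0 \<le> f" "f < 1"
      using nonneg_param_decomp[OF n t(1)] .
    have "real K < real n" using t tf n by (simp add: field_simps)
    moreover have "poly_pt n t \<in> closed_segment (poly_vert n K) (poly_vert n (Suc K))"
      using poly_pt_on_side[OF n tf(2), of K] tf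
      unfolding closed_segment_def by (auto simp: scaleR_conv_of_real)
    ultimately show "x \<in> Pn n" unfolding Pn_def x by auto
  qed
qed

lemma poly_pt_in_Pn:
  assumes "n > 0" and "t \<ge> 0"
  shows "poly_pt n t \<in> Pn n"
proof -
  have "poly_pt n (frac t) \<in> poly_pt n ` {0..<1}" by (simp add: frac_lt_1)
  then show ?thesis using poly_pt_frac[OF assms] Pn_eq_poly_pt_image[OF assms(1)] by simp
qed

lemma poly_vert_in_Pn: "n > 0 \<Longrightarrow> poly_vert n k \<in> Pn n"
  using poly_pt_in_Pn[of n "real k / real n"] poly_pt_vertex[of n k] by simp

lemma continuous_on_poly_pt_upto_vertex:
  assumes n: "n > 0"
  shows "continuous_on {0..real K / real n} (poly_pt n)"
proof (induction K)
  case 0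
  then show ?case by simp
next
  case (Suc K)
  let ?I = "{real K / real n..real (Suc K) / real n}"
  let ?g = "\<lambda>t. of_real (1 - (real n * t - real K)) * poly_vert n K
                  + of_real (real n * t - real K) * poly_vert n (Suc K)"
  have "continuous_on ?I ?g" by (intro continuous_intros)
  moreover have "?g t = poly_pt n t" if t: "t \<in> ?I" for t
  proof -
    have "0 \<le> real n * t - real K" "real n * t - real K \<le> 1"
      using t n by (auto simp: field_simps)
    moreover have "t = (real K + (real n * t - real K)) / real n" using n by simp
    ultimately show ?thesis using poly_pt_on_side[OF n, of "real n * t - real K" K] by simp
  qed
  ultimately have "continuous_on ?I (poly_pt n)" by (rule continuous_on_eq)
  moreover have "real K / real n \<le> real (Suc K) / real n" "0 \<le> real K / real n"
    using n by (simp_all add: divide_right_mono)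
  then have "{0..real (Suc K) / real n} = {0..real K / real n} \<union> ?I"
    by (simp add: ivl_disj_un_two_touch(4))
  ultimately show ?case
    using Suc continuous_on_closed_Un[of "{0..real K / real n}" ?I "poly_pt n"]
    by (metis closed_real_atLeastAtMost)
qed

lemma continuous_on_poly_pt:
  assumes n: "n > 0"
  shows "continuous_on {0..b} (poly_pt n)"
proof -
  have "b \<le> real (nat \<lceil>b\<rceil>)" by (rule real_nat_ceiling_ge)
  also have "\<dots> = real (n * nat \<lceil>b\<rceil>) / real n" using n by simp
  finally have "{0..b} \<subseteq> {0..real (n * nat \<lceil>b\<rceil>) / real n}" by auto
  then show ?thesis
    using continuous_on_poly_pt_upto_vertex[OF n] continuous_on_subset by blast
qed

section \<open>Injectivity of the parametrisation\<close>

lemma cos_lt_of_between: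
  assumes "0 \<le> e" "e < a" "a < 2 * pi - e" "e \<le> pi"
  shows "cos a < cos e"
proof (cases "a \<le> pi")
  case True
  then show ?thesis using assms by (subst cos_mono_less_eq) auto
next
  case False
  then have "cos (2 * pi - a) < cos e" using assms by (subst cos_mono_less_eq) auto
  then show ?thesis by simp
qed

lemma cos_le_of_between:
  assumes "0 \<le> e" "e \<le> a" "a \<le> 2 * pi - e" "e \<le> pi"
  shows "cos a \<le> cos e"
proof (cases "a \<le> pi")
  case True
  then show ?thesis using assms by (subst cos_mono_le_eq) auto
next
  case False
  then have "cos (2 * pi - a) \<le> cos e" using assms by (subst cos_mono_le_eq) auto
  then show ?thesis by simp
qed

lemma poly_vert_1_neq_1: "n \<ge> 2 \<Longrightarrow> poly_vert n 1 \<noteq> 1"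
proof
  assume n: "n \<ge> 2" and eq: "poly_vert n 1 = 1"
  have "cos (2 * pi / n) = Re (poly_vert n 1)" by (simp add: poly_vert_def)
  also have "\<dots> = 1" using eq by simp
  finally have "cos (2 * pi / n) = 1" .
  moreover have "cos (2 * pi / n) < cos 0"
    using n by (intro cos_lt_of_between) (simp_all add: field_simps)
  ultimately show False by simp
qed

lemma Re_side_normal_poly_vert:
  "Re (cnj (cis (pi / n)) * poly_vert n j) = cos ((2 * real j - 1) * pi / n)"
proof -
  have "2 * pi * real j / real n - pi / real n = (2 * real j - 1) * pi / real n"
    by (simp add: diff_divide_distrib left_diff_distrib)
  then have "cnj (cis (pi / n)) * poly_vert n j = cis ((2 * real j - 1) * pi / n)"
    by (simp add: poly_vert_def cis_cnj cis_mult)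
  then show ?thesis by simp
qed

lemma cos_side_normal_bounds:
  assumes n: "n \<ge> 3" and d: "2 \<le> d" "d < n"
  shows "cos ((2 * real d - 1) * pi / n) < cos (pi / n)"
    and "cos ((2 * real (Suc d) - 1) * pi / n) \<le> cos (pi / n)"
proof -
  have npos: "real n > 0" and pin: "0 \<le> pi / n" "pi / n \<le> pi" using n by (simp_all add: field_simps)
  show "cos ((2 * real d - 1) * pi / n) < cos (pi / n)"
  proof (intro cos_lt_of_between pin)
    show "pi / real n < (2 * real d - 1) * pi / real n" using d npos by (simp add: field_simps)
    show "(2 * real d - 1) * pi / real n < 2 * pi - pi / real n" using d npos by (simp add: field_simps)
  qed
  show "cos ((2 * real (Suc d) - 1) * pi / n) \<le> cos (pi / n)"
  proof (intro cos_le_of_between pin)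
    show "pi / real n \<le> (2 * real (Suc d) - 1) * pi / real n" using npos by (simp add: field_simps)
    have "(2 * real (Suc d) - 1) * pi / real n \<le> (2 * real n - 1) * pi / real n"
      using d npos by (intro divide_right_mono mult_right_mono) simp_all
    also have "\<dots> = 2 * pi - pi / real n" using npos by (simp add: field_simps)
    finally show "(2 * real (Suc d) - 1) * pi / real n \<le> 2 * pi - pi / real n" .
  qed
qed

text \<open>The first side lies on the line \<open>Re (cnj (cis (pi / n)) * z) = cos (pi / n)\<close>, and
  every other side lies strictly on the side of it containing the origin, except at a
  shared vertex.\<close>
lemma first_side_eq_side:
  assumes n: "n \<ge> 3" and x: "0 \<le> x" "x < 1" and y: "0 \<le> y" "y < 1" and d: "d < n"
    and eq: "of_real (1 - x) + of_real x * poly_vert n 1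
             = of_real (1 - y) * poly_vert n d + of_real y * poly_vert n (Suc d)"
  shows "d = 0 \<and> x = y"
proof -
  define R where "R z = Re (cnj (cis (pi / n)) * z)" for z
  define h where "h j = cos ((2 * real j - 1) * pi / n)" for j
  define c where "c = cos (pi / n)"
  have R_vert: "R (poly_vert n j) = h j" for j
    unfolding R_def h_def by (rule Re_side_normal_poly_vert)
  have R_lin: "R (of_real a * u + of_real b * w) = a * R u + b * R w" for a b u w
    unfolding R_def by (simp add: algebra_simps)
  have "(1 - x) * h 0 + x * h 1 = (1 - y) * h d + y * h (Suc d)"
    using arg_cong[OF eq, of R] R_lin[of "1 - x" "poly_vert n 0"] R_lin[of "1 - y"] R_vert[of 0]
    by (simp add: R_vert)
  moreover have "h 0 = c" "h 1 = c" unfolding h_def c_def by simp_all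
  ultimately have side: "c = (1 - y) * h d + y * h (Suc d)" by (simp add: algebra_simps)
  consider "d = 0" | "d = 1" | "d \<ge> 2" by linarith
  then show ?thesis
  proof cases
    case 1
    then have "of_real (x - y) * (poly_vert n 1 - 1) = 0" using eq by (simp add: algebra_simps)
    then show ?thesis using poly_vert_1_neq_1[of n] n 1 by simp
  next
    case 2
    have "h 2 < c" unfolding h_def c_def using cos_side_normal_bounds(1)[OF n, of 2] n by simp
    moreover have "y * (c - h 2) = 0" using side 2 \<open>h 1 = c\<close> by (simp add: algebra_simps numeral_2_eq_2)
    ultimately have "y = 0" by simp
    then have "of_real (1 - x) * (1 - poly_vert n 1) = 0" using eq 2 by (simp add: algebra_simps)
    then show ?thesis using poly_vert_1_neq_1[of n] n x by simp
  next
    case 3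
    have "(1 - y) * h d < (1 - y) * c"
      using cos_side_normal_bounds(1)[OF n 3 d] y unfolding h_def c_def by simp
    moreover have "y * h (Suc d) \<le> y * c"
      using cos_side_normal_bounds(2)[OF n 3 d] y unfolding h_def c_def by (simp add: mult_left_mono)
    ultimately show ?thesis using side by (simp add: algebra_simps)
  qed
qed

lemma poly_pt_eq_on_sides:
  assumes n: "n \<ge> 3" and x: "0 \<le> x" "x < 1" and y: "0 \<le> y" "y < 1" and K: "K \<le> K'" "K' < n"
    and eq: "poly_pt n ((real K + x) / n) = poly_pt n ((real K' + y) / n)"
  shows "K = K' \<and> x = y"
proof -
  have n0: "n > 0" using n by simp
  define d where "d = K' - K"
  have K': "K' = K + d" and "d < n" using K unfolding d_def by simp_all
  have "poly_pt n ((real K + x) / n) = of_real (1 - x) * poly_vert n K + of_real x * poly_vert n (Suc K)"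
    using poly_pt_on_side[OF n0 x(1)] x(2) by simp
  also have "\<dots> = poly_vert n K * (of_real (1 - x) + of_real x * poly_vert n 1)"
    using poly_vert_add[of n K 1] by (simp add: algebra_simps)
  finally have eqK: "poly_pt n ((real K + x) / n) = poly_vert n K * (of_real (1 - x) + of_real x * poly_vert n 1)" .
  have "poly_pt n ((real K' + y) / n) = of_real (1 - y) * poly_vert n K' + of_real y * poly_vert n (Suc K')"
    using poly_pt_on_side[OF n0 y(1)] y(2) by simp
  also have "\<dots> = poly_vert n K * (of_real (1 - y) * poly_vert n d + of_real y * poly_vert n (Suc d))"
    using poly_vert_add[of n K d] poly_vert_add[of n K "Suc d"] K' by (simp add: algebra_simps)
  finally have "poly_vert n K * (of_real (1 - x) + of_real x * poly_vert n 1)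
      = poly_vert n K * (of_real (1 - y) * poly_vert n d + of_real y * poly_vert n (Suc d))"
    using eq eqK by simp
  then have "of_real (1 - x) + of_real x * poly_vert n 1
      = of_real (1 - y) * poly_vert n d + of_real y * poly_vert n (Suc d)"
    by (rule mult_left_cancel[THEN iffD1, rotated]) (metis norm_poly_vert norm_zero zero_neq_one)
  then show ?thesis using first_side_eq_side[OF n x y \<open>d < n\<close>] K' by simp
qed

lemma inj_on_poly_pt:
  assumes n: "n \<ge> 3"
  shows "inj_on (poly_pt n) {0..<1}"
proof
  fix a b assume a: "a \<in> {0..<1}" and b: "b \<in> {0..<1}" and eq: "poly_pt n a = poly_pt n b"
  have n0: "n > 0" using n by simp
  obtain K x where ax: "a = (real K + x) / real n" "0 \<le> x" "x < 1"
    using nonneg_param_decomp[OF n0] a by auto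
  obtain K' y where bx: "b = (real K' + y) / real n" "0 \<le> y" "y < 1"
    using nonneg_param_decomp[OF n0] b by auto
  have "a * real n < real n" "b * real n < real n" using a b n0 by simp_all
  moreover have "a * real n = real K + x" "b * real n = real K' + y" using ax bx n0 by simp_all
  ultimately have "K < n" "K' < n" using ax bx by linarith+
  show "a = b"
  proof (cases "K \<le> K'")
    case True
    then show ?thesis using poly_pt_eq_on_sides[OF n ax(2,3) bx(2,3) True \<open>K' < n\<close>] eq ax bx by simp
  next
    case False
    then have "K' \<le> K" by simp
    then show ?thesis
      using poly_pt_eq_on_sides[OF n bx(2,3) ax(2,3) \<open>K' \<le> K\<close> \<open>K < n\<close>] eq ax bx by simp
  qed
qed

lemma poly_pos_poly_pt:
  assumes "n \<ge> 3" and "t \<in> {0..<1}"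
  shows "poly_pos n (poly_pt n t) = t"
  unfolding poly_pos_def
  using assms inj_on_poly_pt[OF assms(1)] by (auto intro!: the_equality dest: inj_onD)

lemma
  assumes n: "n \<ge> 3" and p: "p \<in> Pn n"
  shows poly_pos_range: "poly_pos n p \<in> {0..<1}"
    and poly_pt_poly_pos: "poly_pt n (poly_pos n p) = p"
proof -
  obtain t where "t \<in> {0..<1}" "p = poly_pt n t"
    using p Pn_eq_poly_pt_image[of n] n by auto
  then show "poly_pos n p \<in> {0..<1}" "poly_pt n (poly_pos n p) = p"
    using poly_pos_poly_pt[OF n] by simp_all
qed

lemma dP_nonneg: "0 \<le> dP n u w" and dP_less_1: "dP n u w < 1"
  by (simp_all add: dP_def frac_lt_1)

lemma dP_poly_pt:
  assumes "n \<ge> 3" and "a \<in> {0..<1}" and "b \<in> {0..<1}"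
  shows "dP n (poly_pt n a) (poly_pt n b) = frac (b - a)"
  using assms by (simp add: dP_def poly_pos_poly_pt)

lemma dP_poly_pt_add:
  assumes n: "n \<ge> 3" and p: "p \<in> Pn n" and t: "t \<in> {0..<1}"
  shows "dP n p (poly_pt n (poly_pos n p + t)) = t"
proof -
  define a where "a = poly_pos n p"
  have a: "a \<in> {0..<1}" using poly_pos_range[OF n p] unfolding a_def .
  have "poly_pt n (a + t) = poly_pt n (frac (a + t))"
    using poly_pt_frac[of n "a + t"] a t n by simp
  moreover have "frac (frac (a + t) - a) = t"
  proof -
    have "frac (a + t) - a = t - of_int \<lfloor>a + t\<rfloor>" by (simp add: frac_def)
    then have "frac (frac (a + t) - a) = frac t" by (simp add: frac_def)
    then show ?thesis using t by (simp add: frac_eq)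
  qed
  ultimately show ?thesis
    using dP_poly_pt[OF n a, of "frac (a + t)"] poly_pt_poly_pos[OF n p]
    unfolding a_def by (simp add: frac_lt_1)
qed

lemma poly_pt_add_dP:
  assumes n: "n \<ge> 3" and p: "p \<in> Pn n" and w: "w \<in> Pn n"
  shows "poly_pt n (poly_pos n p + dP n p w) = w"
proof -
  define a where "a = poly_pos n p"
  define b where "b = poly_pos n w"
  have a: "0 \<le> a" "a < 1" and b: "0 \<le> b" "b < 1"
    using poly_pos_range[OF n p] poly_pos_range[OF n w] unfolding a_def b_def by auto
  have "poly_pt n (a + frac (b - a)) = poly_pt n b"
  proof (cases "a \<le> b")
    case True
    then show ?thesis using a b by (simp add: frac_eq)
  next
    case False
    then have "frac (b - a) = b - a + 1" using a b by (subst frac_unique_iff) simp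
    then have "a + frac (b - a) = b + real 1" by simp
    then show ?thesis using poly_pt_periodic[of n b 1] n b by simp
  qed
  then show ?thesis using poly_pt_poly_pos[OF n w] unfolding dP_def a_def b_def by simp
qed

section \<open>Chords from a vertex are the longest\<close>

lemma norm_affine_le_max:
  fixes A B :: "'a::real_normed_vector"
  assumes "x \<in> {x0..x1}"
  shows "norm (A + x *\<^sub>R B) \<le> max (norm (A + x0 *\<^sub>R B)) (norm (A + x1 *\<^sub>R B))"
proof -
  have "convex_on {x0..x1} (\<lambda>x. norm (A + x *\<^sub>R B))"
  proof (rule convex_onI)
    fix t x y :: real assume t: "0 < t" "t < 1"
    have "A + ((1 - t) *\<^sub>R x + t *\<^sub>R y) *\<^sub>R B = (1 - t) *\<^sub>R (A + x *\<^sub>R B) + t *\<^sub>R (A + y *\<^sub>R B)"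
      by (simp add: algebra_simps)
    then show "norm (A + ((1 - t) *\<^sub>R x + t *\<^sub>R y) *\<^sub>R B)
               \<le> (1 - t) * norm (A + x *\<^sub>R B) + t * norm (A + y *\<^sub>R B)"
      using norm_triangle_ineq[of "(1 - t) *\<^sub>R (A + x *\<^sub>R B)" "t *\<^sub>R (A + y *\<^sub>R B)"] t by simp
  qed simp
  then show ?thesis using convex_on_le_max assms by blast
qed

text \<open>Reflection symmetry of the polygon: the chord from the point of the first side at
  parameter \<open>1 - y\<close> to the vertex \<open>m + 1\<close> is congruent to the chord from the vertex \<open>0\<close> to
  the point of side \<open>m\<close> at parameter \<open>y\<close>.\<close>
lemma norm_side_point_vertex_reflect:
  "norm (of_real y + of_real (1 - y) * poly_vert n 1 - poly_vert n (Suc m))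
   = norm (1 - (of_real (1 - y) * poly_vert n m + of_real y * poly_vert n (Suc m)))"
proof -
  let ?E = "of_real y + of_real (1 - y) * poly_vert n 1 - poly_vert n (Suc m)"
  have c1: "cnj (poly_vert n 1) * poly_vert n (Suc m) = poly_vert n m"
    using cnj_poly_vert_mult[of n 1 m] by simp
  have c2: "cnj (poly_vert n (Suc m)) * poly_vert n (Suc m) = 1"
    using cnj_poly_vert_mult[of n "Suc m" 0] by simp
  have "poly_vert n (Suc m) * cnj ?E
        = of_real y * poly_vert n (Suc m) + of_real (1 - y) * (cnj (poly_vert n 1) * poly_vert n (Suc m))
          - cnj (poly_vert n (Suc m)) * poly_vert n (Suc m)"
    by (simp add: algebra_simps)
  also have "\<dots> = - (1 - (of_real (1 - y) * poly_vert n m + of_real y * poly_vert n (Suc m)))"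
    unfolding c1 c2 by (simp add: algebra_simps)
  finally have "norm (poly_vert n (Suc m) * cnj ?E)
      = norm (1 - (of_real (1 - y) * poly_vert n m + of_real y * poly_vert n (Suc m)))"
    by (metis norm_minus_cancel)
  moreover have "norm ?E = norm (poly_vert n (Suc m) * cnj ?E)"
    by (simp only: norm_mult norm_poly_vert complex_mod_cnj mult_1_left)
  ultimately show ?thesis by simp
qed

text \<open>The chord is convex in the starting point, so only the two ends of the side matter;
  at one of them the reflection above is needed.\<close>
lemma chord_from_first_side_le:
  assumes n: "n > 0" and x: "0 \<le> x" "x < 1" and t: "0 \<le> t"
  shows "norm (poly_pt n (x / n) - poly_pt n (x / n + t)) \<le> norm (1 - poly_pt n t)"
proof -
  obtain m y where ty: "t = (real m + y) / real n" "0 \<le> y" "y < 1"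
    using nonneg_param_decomp[OF n t] .
  let ?w = "poly_vert n 1" and ?a = "poly_vert n m" and ?b = "poly_vert n (Suc m)"
    and ?c = "poly_vert n (Suc (Suc m))"
  note affine_max = norm_affine_le_max[where 'a = complex, unfolded scaleR_conv_of_real]
  have gt: "poly_pt n t = of_real (1 - y) * ?a + of_real y * ?b"
    using poly_pt_on_side[OF n ty(2)] ty by simp
  have gx: "poly_pt n (x / n) = of_real (1 - x) + of_real x * ?w"
    using poly_pt_on_side[OF n x(1), of 0] x by simp
  have reflect: "norm (of_real y + of_real (1 - y) * ?w - ?b) = norm (1 - poly_pt n t)"
    unfolding gt by (rule norm_side_point_vertex_reflect)
  show ?thesis
  proof (cases "x + y \<le> 1")
    case True
    have "x / n + t = (real m + (x + y)) / n" using ty(1) by (simp add: add_divide_distrib)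
    then have "poly_pt n (x / n + t) = of_real (1 - (x + y)) * ?a + of_real (x + y) * ?b"
      using poly_pt_on_side[OF n _ True, of m] x ty by simp
    then have "poly_pt n (x / n) - poly_pt n (x / n + t) = (1 - poly_pt n t) + of_real x * (?w - 1 + ?a - ?b)"
      and "of_real y + of_real (1 - y) * ?w - ?b = (1 - poly_pt n t) + of_real (1 - y) * (?w - 1 + ?a - ?b)"
      unfolding gx gt by (simp_all add: algebra_simps)
    then show ?thesis
      using affine_max[of x 0 "1 - y" "1 - poly_pt n t" "?w - 1 + ?a - ?b"] x True reflect by simp
  next
    case False
    have "x / n + t = (real (Suc m) + (x + y - 1)) / n" using ty(1) by (simp add: add_divide_distrib)
    then have g2: "poly_pt n (x / n + t) = of_real (1 - (x + y - 1)) * ?b + of_real (x + y - 1) * ?c"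
      using poly_pt_on_side[OF n, of "x + y - 1" "Suc m"] x ty False by simp
    define E where "E = 1 - (of_real (2 - y) * ?b + of_real (y - 1) * ?c)"
    define D where "D = ?w - 1 + ?b - ?c"
    have ED: "of_real (1 - z) + of_real z * ?w
              - (of_real (1 - (z + y - 1)) * ?b + of_real (z + y - 1) * ?c) = E + of_real z * D" for z
      unfolding E_def D_def by (simp add: algebra_simps)
    have "norm (poly_pt n (x / n) - poly_pt n (x / n + t)) = norm (E + of_real x * D)"
      unfolding gx g2 ED ..
    also have "\<dots> \<le> max (norm (E + of_real (1 - y) * D)) (norm (E + of_real 1 * D))"
      by (rule affine_max) (use x False in simp)
    also have "E + of_real (1 - y) * D = of_real y + of_real (1 - y) * ?w - ?b"
      using ED[of "1 - y"] by simp
    also have "E + of_real 1 * D = ?w * (1 - poly_pt n t)"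
      using ED[of 1] poly_vert_add[of n 1 m] poly_vert_add[of n 1 "Suc m"]
      unfolding gt by (simp add: algebra_simps)
    finally show ?thesis using reflect by (simp add: norm_mult)
  qed
qed

lemma chord_le_chord_from_vertex:
  assumes n: "n > 0" and a: "0 \<le> a" and t: "0 \<le> t"
  shows "norm (poly_pt n a - poly_pt n (a + t)) \<le> norm (1 - poly_pt n t)"
proof -
  obtain K x where ax: "a = (real K + x) / real n" "0 \<le> x" "x < 1"
    using nonneg_param_decomp[OF n a] .
  have a1: "a = x / n + real K / n" using ax(1) by (simp add: add_divide_distrib)
  have "poly_pt n a = poly_vert n K * poly_pt n (x / n)"
    unfolding a1 by (rule poly_pt_rotate[OF n]) (use ax in simp)
  moreover have "poly_pt n (a + t) = poly_vert n K * poly_pt n (x / n + t)"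
    using poly_pt_rotate[OF n, of "x / n + t" K] ax t a1 by (simp add: algebra_simps)
  ultimately have "norm (poly_pt n a - poly_pt n (a + t)) = norm (poly_pt n (x / n) - poly_pt n (x / n + t))"
    by (simp add: norm_mult right_diff_distrib[symmetric])
  also have "\<dots> \<le> norm (1 - poly_pt n t)" by (rule chord_from_first_side_le[OF n ax(2,3) t])
  finally show ?thesis .
qed

lemma chord_from_vertex:
  assumes n: "n > 0" and t: "0 \<le> t"
  shows "norm (poly_vert n k - poly_pt n (real k / n + t)) = norm (1 - poly_pt n t)"
proof -
  have "poly_vert n k - poly_pt n (real k / n + t) = poly_vert n k * (1 - poly_pt n t)"
    using poly_pt_rotate[OF n t, of k] by (simp add: add.commute algebra_simps)
  then show ?thesis by (simp add: norm_mult)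
qed

section \<open>The first point at distance \<open>r\<close>\<close>

lemma g_map_eqI:
  assumes n: "n \<ge> 3" and p: "p \<in> Pn n" and w: "w \<in> Pn n" "norm (p - w) = r"
    and least: "\<And>w'. w' \<in> Pn n \<Longrightarrow> norm (p - w') = r \<Longrightarrow> dP n p w \<le> dP n p w'"
  shows "g_map n r p = w"
  unfolding g_map_def
proof (rule the_equality)
  show "w \<in> Pn n \<and> norm (p - w) = r
        \<and> (\<forall>w'\<in>Pn n. norm (p - w') = r \<longrightarrow> dP n p w \<le> dP n p w')"
    using w least by blast
next
  fix u assume u: "u \<in> Pn n \<and> norm (p - u) = r
                   \<and> (\<forall>w'\<in>Pn n. norm (p - w') = r \<longrightarrow> dP n p u \<le> dP n p w')"
  then have "dP n p u \<le> dP n p w" "dP n p w \<le> dP n p u" using w least by auto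
  then have "dP n p u = dP n p w" by simp
  then show "u = w" using poly_pt_add_dP[OF n p] w u by metis
qed

lemma continuous_on_dist_poly_pt:
  assumes "n > 0" and "0 \<le> a" "a \<le> 1"
  shows "continuous_on {0..1} (\<lambda>\<tau>. norm (q - poly_pt n (a + \<tau>)))"
proof -
  have "continuous_on {0..2} (poly_pt n)" by (rule continuous_on_poly_pt[OF assms(1)])
  moreover have "continuous_on {0..1} (\<lambda>\<tau>. a + \<tau>)" by (intro continuous_intros)
  moreover have "(\<lambda>\<tau>. a + \<tau>) ` {0..1} \<subseteq> {0..2}" using assms by auto
  ultimately have "continuous_on {0..1} (\<lambda>\<tau>. poly_pt n (a + \<tau>))"
    using continuous_on_compose2 by blast
  then show ?thesis by (intro continuous_intros)
qed

text \<open>The arc distances in \<open>[0, t]\<close> at which the distance from \<open>p\<close> equals \<open>r\<close> form a closed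
  set, nonempty by the intermediate value theorem; its least element is the arc distance
  of \<open>g_map n r p\<close>.\<close>
lemma g_map_first_hit:
  assumes n: "n \<ge> 3" and p: "p \<in> Pn n" and r: "0 \<le> r" and t: "t \<in> {0..<1}"
    and far: "r \<le> norm (p - poly_pt n (poly_pos n p + t))"
  shows "g_map n r p \<in> Pn n" "norm (p - g_map n r p) = r" "dP n p (g_map n r p) \<le> t"
proof -
  define a where "a = poly_pos n p"
  define f where "f \<tau> = norm (p - poly_pt n (a + \<tau>))" for \<tau>
  define T where "T = {\<tau> \<in> {0..t}. f \<tau> = r}"
  have a: "a \<in> {0..<1}" "poly_pt n a = p"
    using poly_pos_range[OF n p] poly_pt_poly_pos[OF n p] unfolding a_def by auto
  have cont: "continuous_on {0..t} f"
    using continuous_on_dist_poly_pt[of n a p] n a t unfolding f_def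
    by (auto elim: continuous_on_subset)
  obtain \<tau> where "\<tau> \<in> T"
    using IVT'[of f 0 r t] cont r far t a unfolding T_def f_def a_def by auto
  moreover have "closed T" unfolding T_def using cont by (rule continuous_closed_preimage_constant) simp
  moreover have "bdd_below T" unfolding T_def by (rule bdd_belowI[of _ 0]) auto
  ultimately have "Inf T \<in> T" using closed_contains_Inf by blast
  define w where "w = poly_pt n (a + Inf T)"
  have Inf: "Inf T \<in> {0..<1}" "Inf T \<le> t" "norm (p - w) = r"
    using \<open>Inf T \<in> T\<close> t unfolding T_def f_def w_def by auto
  have w: "w \<in> Pn n" "dP n p w = Inf T"
    using poly_pt_in_Pn[of n "a + Inf T"] dP_poly_pt_add[OF n p Inf(1)] n a(1) Inf(1)
    unfolding w_def a_def by auto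
  have "dP n p w \<le> dP n p w'" if "w' \<in> Pn n" "norm (p - w') = r" for w'
  proof (cases "dP n p w' \<le> t")
    case True
    then have "dP n p w' \<in> T"
      using poly_pt_add_dP[OF n p that(1)] that(2) dP_nonneg[of n p w'] unfolding T_def f_def a_def by simp
    then show ?thesis using w(2) \<open>bdd_below T\<close> by (simp add: cInf_lower)
  qed (use w(2) Inf(2) in simp)
  then have "g_map n r p = w" by (rule g_map_eqI[OF n p w(1) Inf(3)])
  then show "g_map n r p \<in> Pn n" "norm (p - g_map n r p) = r" "dP n p (g_map n r p) \<le> t"
    using w Inf by simp_all
qed

section \<open>An upper bound for \<open>r_n\<close>\<close>

lemma r_crit_le_of_not_vr_cyclic:
  assumes "\<not> vr_cyclic n r" and "0 < r"
  shows "r_crit n \<le> r"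
  unfolding r_crit_def
proof (rule cSup_least)
  show "{r. 0 \<le> r \<and> (\<forall>r'. 0 < r' \<and> r' < r \<longrightarrow> vr_cyclic n r')} \<noteq> {}" by auto
next
  fix x assume "x \<in> {r. 0 \<le> r \<and> (\<forall>r'. 0 < r' \<and> r' < r \<longrightarrow> vr_cyclic n r')}"
  then show "x \<le> r" using assms by (metis (mono_tags, lifting) mem_Collect_eq not_le)
qed

lemma not_vr_cyclic_of_chord_shrinks:
  assumes "u0 \<in> Pn n" "w \<in> Pn n" "u1 \<in> Pn n" and between: "ccw_between n u0 w u1"
    and "dP n u0 u1 < dP n u1 u0" and "norm (u0 - u1) < norm (u0 - w)"
  shows "\<not> vr_cyclic n (norm (u0 - w))"
proof
  assume "vr_cyclic n (norm (u0 - w))"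
  moreover have "0 < dP n u0 u1" using between unfolding ccw_between_def by linarith
  then have "u0 \<noteq> u1" by (auto simp: dP_def)
  then have "vr_edge n (norm (u0 - w)) u0 u1" using assms by (simp add: vr_edge_def)
  ultimately have "vr_edge n (norm (u0 - w)) u0 w" using assms unfolding vr_cyclic_def by blast
  then show False by (simp add: vr_edge_def)
qed

lemma r_crit_le_chord:
  assumes n: "n \<ge> 3" and p: "0 \<le> p0" "p0 < pw" "pw < p1" "p1 < 1" "2 * (p1 - p0) < 1"
    and shrinks: "norm (poly_pt n p0 - poly_pt n p1) < norm (poly_pt n p0 - poly_pt n pw)"
  shows "r_crit n \<le> norm (poly_pt n p0 - poly_pt n pw)"
proof (rule r_crit_le_of_not_vr_cyclic)
  have dP: "dP n (poly_pt n p0) (poly_pt n p1) = p1 - p0"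
    "dP n (poly_pt n p1) (poly_pt n p0) = 1 - (p1 - p0)"
    "dP n (poly_pt n p0) (poly_pt n pw) = pw - p0"
    using dP_poly_pt[OF n, of p0 p1] dP_poly_pt[OF n, of p1 p0] dP_poly_pt[OF n, of p0 pw] p
    by (simp_all add: frac_eq frac_unique_iff)
  show "\<not> vr_cyclic n (norm (poly_pt n p0 - poly_pt n pw))"
  proof (rule not_vr_cyclic_of_chord_shrinks)
    show "poly_pt n p0 \<in> Pn n" "poly_pt n pw \<in> Pn n" "poly_pt n p1 \<in> Pn n"
      using poly_pt_in_Pn[of n] n p by simp_all
  qed (use dP p shrinks in \<open>simp_all add: ccw_between_def\<close>)
  show "0 < norm (poly_pt n p0 - poly_pt n pw)"
    using shrinks norm_ge_zero by (rule le_less_trans[rotated])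
qed

lemma cos_sin_pi_div_bounds:
  fixes n :: nat
  assumes "n \<ge> 3"
  shows "0 < cos (pi / n)" "cos (pi / n) < 1" "0 < sin (pi / n)"
proof -
  have a: "0 < pi / n" "pi / n < pi / 2" using assms by (simp_all add: field_simps)
  then show "0 < cos (pi / n)" by (intro cos_gt_zero_pi) simp_all
  show "cos (pi / n) < 1" using cos_lt_of_between[of 0 "pi / n"] a by simp
  show "0 < sin (pi / n)" using a pi_gt_zero by (intro sin_gt_zero) linarith+
qed

lemma poly_vert_1_eq:
  "poly_vert n 1 = Complex ((cos (pi / n))\<^sup>2 - (sin (pi / n))\<^sup>2) (2 * sin (pi / n) * cos (pi / n))"
  using cos_double[of "pi / n"] sin_double[of "pi / n"] by (simp add: poly_vert_def complex_eq_iff)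

lemma poly_pt_first_midpoint:
  assumes "n > 0"
  shows "poly_pt n ((1 / 2) / n) = Complex ((cos (pi / n))\<^sup>2) (sin (pi / n) * cos (pi / n))"
proof -
  have "poly_pt n ((1 / 2) / n) = of_real (1 / 2) + of_real (1 / 2) * poly_vert n 1"
    using poly_pt_on_side[OF assms, of "1 / 2" 0] by simp
  then show ?thesis unfolding poly_vert_1_eq by (simp add: complex_eq_iff sin_squared_eq field_simps)
qed

lemma poly_vert_opposite_odd:
  assumes "n = 2 * j + 1"
  shows "poly_vert n j = Complex (- cos (pi / n)) (sin (pi / n))"
    and "poly_vert n (Suc j) = Complex (- cos (pi / n)) (- sin (pi / n))"
proof -
  have "2 * pi * real j / real n = pi - pi / real n"
    and "2 * pi * real (Suc j) / real n = pi + pi / real n"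
    using assms by (simp_all add: field_simps)
  then show "poly_vert n j = Complex (- cos (pi / n)) (sin (pi / n))"
    and "poly_vert n (Suc j) = Complex (- cos (pi / n)) (- sin (pi / n))"
    by (simp_all add: poly_vert_def complex_eq_iff)
qed

lemma poly_vert_opposite_even:
  assumes "n = 2 * j" and "j > 0"
  shows "poly_vert n j = -1" and "poly_vert n (Suc j) = - poly_vert n 1"
proof -
  have "2 * pi * real j / real n = pi" using assms by (simp add: field_simps)
  then show "poly_vert n j = -1" by (simp add: poly_vert_def complex_eq_iff)
  then show "poly_vert n (Suc j) = - poly_vert n 1" using poly_vert_add[of n j 1] by simp
qed

lemma Pn_elim_side:
  assumes "q \<in> Pn n"
  obtains K x where "0 \<le> x" "x \<le> 1" "q = poly_vert n K * (of_real (1 - x) + of_real x * poly_vert n 1)"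
proof -
  obtain K x where "0 \<le> x" "x \<le> 1" "q = (1 - x) *\<^sub>R poly_vert n K + x *\<^sub>R poly_vert n (Suc K)"
    using assms unfolding Pn_def closed_segment_def by auto
  moreover have "poly_vert n (Suc K) = poly_vert n K * poly_vert n 1"
    using poly_vert_add[of n K 1] by simp
  ultimately show ?thesis using that by (simp add: scaleR_conv_of_real algebra_simps)
qed

lemma norm_rotate_sub_poly_vert:
  "norm (poly_vert n K * z - poly_vert n (K + m)) = norm (z - poly_vert n m)"
proof -
  have "poly_vert n K * z - poly_vert n (K + m) = poly_vert n K * (z - poly_vert n m)"
    by (simp add: poly_vert_add algebra_simps)
  then show ?thesis by (simp add: norm_mult)
qed

lemma scaled_params_bounds:
  fixes a b c :: real
  assumes "n > 0" "0 \<le> a" "a < b" "b < c" "c < real n" "2 * (c - a) < real n"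
  shows "0 \<le> a / n" "a / n < b / n" "b / n < c / n" "c / n < 1" "2 * (c / n - a / n) < 1"
  using assms by (simp_all add: field_simps)

text \<open>Witness: seen from the midpoint of the first side, the opposite vertex \<open>j\<close> is farther
  away than the point of side \<open>j\<close> at parameter \<open>(1 - cos (pi / n)) / 2\<close>.\<close>
lemma r_crit_le_odd:
  assumes n: "n \<ge> 3" and j: "n = 2 * j + 1"
  shows "r_crit n \<le> 1 + cos (pi / n)"
proof -
  define c where "c = cos (pi / n)"
  define s where "s = sin (pi / n)"
  have cs: "0 < c" "c < 1" "0 < s" "s\<^sup>2 = 1 - c\<^sup>2"
    using cos_sin_pi_div_bounds[OF n] sin_squared_eq[of "pi / n"] unfolding c_def s_def by auto
  have n0: "n > 0" and rn: "real n = 2 * real j + 1" and "j \<ge> 1" using n j by simp_all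
  note vj = poly_vert_opposite_odd(1)[OF j, folded c_def s_def]
    and vj1 = poly_vert_opposite_odd(2)[OF j, folded c_def s_def]
  define t where "t = (1 - c) / 2"
  have t: "0 < t" "t < 1 / 2" using cs unfolding t_def by simp_all
  define p0 where "p0 = (1 / 2) / real n"
  define pw where "pw = real j / real n"
  define p1 where "p1 = (real j + t) / real n"
  have u0: "poly_pt n p0 = Complex (c\<^sup>2) (s * c)"
    unfolding p0_def c_def s_def by (rule poly_pt_first_midpoint[OF n0])
  have uw: "poly_pt n pw = Complex (- c) s" unfolding pw_def poly_pt_vertex[OF n0] vj ..
  have "poly_pt n p1 = of_real (1 - t) * poly_vert n j + of_real t * poly_vert n (Suc j)"
    unfolding p1_def using t by (intro poly_pt_on_side[OF n0]) simp_all
  also have "\<dots> = Complex (- c) (s * c)"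
    unfolding vj vj1 t_def by (simp add: complex_eq_iff field_simps)
  finally have u1: "poly_pt n p1 = Complex (- c) (s * c)" .
  have d0w: "norm (poly_pt n p0 - poly_pt n pw) = sqrt ((c\<^sup>2 + c)\<^sup>2 + (s * c - s)\<^sup>2)"
    and d01: "norm (poly_pt n p0 - poly_pt n p1) = sqrt ((c\<^sup>2 + c)\<^sup>2)"
    unfolding u0 uw u1 complex_diff complex_norm by simp_all
  have "r_crit n \<le> norm (poly_pt n p0 - poly_pt n pw)"
  proof (rule r_crit_le_chord[OF n])
    have "(0::real) \<le> 1 / 2" "1 / 2 < real j" "real j < real j + t" "real j + t < real n"
      "2 * ((real j + t) - 1 / 2) < real n"
      using \<open>j \<ge> 1\<close> t rn by simp_all
    then show "0 \<le> p0" "p0 < pw" "pw < p1" "p1 < 1" "2 * (p1 - p0) < 1"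
      unfolding p0_def pw_def p1_def by (rule scaled_params_bounds[OF n0])+
    show "norm (poly_pt n p0 - poly_pt n p1) < norm (poly_pt n p0 - poly_pt n pw)"
      unfolding d0w d01 using cs by (intro real_sqrt_less_mono) simp
  qed
  also have "\<dots> \<le> sqrt ((1 + c)\<^sup>2)"
  proof -
    have "(c\<^sup>2 + c)\<^sup>2 + (s * c - s)\<^sup>2 = (1 + c)\<^sup>2 - 4 * c * (1 - c) * (1 + c)"
      using cs(4) by algebra
    also have "\<dots> \<le> (1 + c)\<^sup>2" using cs by simp
    finally show ?thesis unfolding d0w by (rule real_sqrt_le_mono)
  qed
  finally show ?thesis using cs unfolding c_def by simp
qed

lemma far_vertex_odd:
  assumes n: "n \<ge> 3" and j: "n = 2 * j + 1" and x: "0 \<le> x" "x \<le> 1"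
  shows "1 + cos (pi / n) \<le> norm (of_real (1 - x) + of_real x * poly_vert n 1 - poly_vert n (Suc j))"
proof -
  define c where "c = cos (pi / n)"
  define s where "s = sin (pi / n)"
  have cs: "0 < c" "s\<^sup>2 = 1 - c\<^sup>2"
    using cos_sin_pi_div_bounds[OF n] sin_squared_eq[of "pi / n"] unfolding c_def s_def by auto
  have "of_real (1 - x) + of_real x * poly_vert n 1 - poly_vert n (Suc j)
             = Complex (1 - x + x * (c\<^sup>2 - s\<^sup>2) + c) (x * (2 * s * c) + s)"
    unfolding poly_vert_1_eq poly_vert_opposite_odd(2)[OF j] c_def s_def by (simp add: complex_eq_iff)
  moreover have "(1 - x + x * (c\<^sup>2 - s\<^sup>2) + c)\<^sup>2 + (x * (2 * s * c) + s)\<^sup>2 = (1 + c)\<^sup>2 + s\<^sup>2 * (2 * x - 1)\<^sup>2"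
    using cs(2) by algebra
  ultimately have "norm (of_real (1 - x) + of_real x * poly_vert n 1 - poly_vert n (Suc j))
                   = sqrt ((1 + c)\<^sup>2 + s\<^sup>2 * (2 * x - 1)\<^sup>2)"
    by (simp add: complex_norm)
  moreover have "sqrt ((1 + c)\<^sup>2) \<le> sqrt ((1 + c)\<^sup>2 + s\<^sup>2 * (2 * x - 1)\<^sup>2)"
    by (rule real_sqrt_le_mono) simp
  ultimately show ?thesis using cs unfolding c_def by simp
qed

text \<open>Witness: seen from the midpoint of the first side, the opposite vertex \<open>j\<close> is farther
  away than the point of side \<open>j\<close> at parameter \<open>1 / 4\<close>.\<close>
lemma r_crit_le_even:
  assumes n: "n \<ge> 3" and j: "n = 2 * j"
  shows "r_crit n \<le> sqrt (1 + 3 * (cos (pi / n))\<^sup>2)"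
proof -
  define c where "c = cos (pi / n)"
  define s where "s = sin (pi / n)"
  have cs: "0 < c" "c < 1" "s\<^sup>2 = 1 - c\<^sup>2"
    using cos_sin_pi_div_bounds[OF n] sin_squared_eq[of "pi / n"] unfolding c_def s_def by auto
  have n0: "n > 0" and rn: "real n = 2 * real j" and "j \<ge> 2" using n j by simp_all
  have vj: "poly_vert n j = Complex (- 1) 0"
    using poly_vert_opposite_even(1)[OF j] \<open>j \<ge> 2\<close> by (simp add: complex_eq_iff)
  have vj1: "poly_vert n (Suc j) = Complex (- (c\<^sup>2 - s\<^sup>2)) (- (2 * s * c))"
    using poly_vert_opposite_even(2)[OF j] \<open>j \<ge> 2\<close> unfolding poly_vert_1_eq c_def s_def
    by (simp add: complex_eq_iff)
  define p0 where "p0 = (1 / 2) / real n"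
  define pw where "pw = real j / real n"
  define p1 where "p1 = (real j + 1 / 4) / real n"
  have u0: "poly_pt n p0 = Complex (c\<^sup>2) (s * c)"
    unfolding p0_def c_def s_def by (rule poly_pt_first_midpoint[OF n0])
  have uw: "poly_pt n pw = Complex (- 1) 0" unfolding pw_def poly_pt_vertex[OF n0] vj ..
  have "poly_pt n p1 = of_real (1 - 1 / 4) * poly_vert n j + of_real (1 / 4) * poly_vert n (Suc j)"
    unfolding p1_def by (intro poly_pt_on_side[OF n0]) simp_all
  then have u1: "poly_pt n p1 = Complex (- 3 / 4 - (c\<^sup>2 - s\<^sup>2) / 4) (- (2 * s * c) / 4)"
    unfolding vj vj1 by (simp add: complex_eq_iff field_simps)
  have "(c\<^sup>2 + 1)\<^sup>2 + (s * c)\<^sup>2 = 1 + 3 * c\<^sup>2" using cs(3) by algebra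
  then have d0w: "norm (poly_pt n p0 - poly_pt n pw) = sqrt (1 + 3 * c\<^sup>2)"
    unfolding u0 uw complex_diff complex_norm by simp
  have "(c\<^sup>2 - (- 3 / 4 - (c\<^sup>2 - s\<^sup>2) / 4))\<^sup>2 + (s * c - - (2 * s * c) / 4)\<^sup>2 = (1 + 15 * c\<^sup>2) / 4"
    using cs(3) by algebra
  then have d01: "norm (poly_pt n p0 - poly_pt n p1) = sqrt ((1 + 15 * c\<^sup>2) / 4)"
    unfolding u0 u1 complex_diff complex_norm by simp
  have "r_crit n \<le> norm (poly_pt n p0 - poly_pt n pw)"
  proof (rule r_crit_le_chord[OF n])
    have "(0::real) \<le> 1 / 2" "1 / 2 < real j" "real j < real j + 1 / 4" "real j + 1 / 4 < real n"
      "2 * ((real j + 1 / 4) - 1 / 2) < real n"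
      using \<open>j \<ge> 2\<close> rn by simp_all
    then show "0 \<le> p0" "p0 < pw" "pw < p1" "p1 < 1" "2 * (p1 - p0) < 1"
      unfolding p0_def pw_def p1_def by (rule scaled_params_bounds[OF n0])+
    have "c\<^sup>2 < 1" using cs by (simp add: power_less_one_iff)
    then show "norm (poly_pt n p0 - poly_pt n p1) < norm (poly_pt n p0 - poly_pt n pw)"
      unfolding d0w d01 by (intro real_sqrt_less_mono) simp
  qed
  then show ?thesis unfolding d0w c_def .
qed

lemma far_vertex_even:
  assumes n: "n \<ge> 3" and j: "n = 2 * j" and x: "0 \<le> x" "x \<le> 1"
  shows "\<exists>m. sqrt (1 + 3 * (cos (pi / n))\<^sup>2)
              \<le> norm (of_real (1 - x) + of_real x * poly_vert n 1 - poly_vert n m)"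
proof -
  define c where "c = cos (pi / n)"
  define s where "s = sin (pi / n)"
  have cs: "s\<^sup>2 = 1 - c\<^sup>2" unfolding c_def s_def by (rule sin_squared_eq)
  have "j > 0" using n j by simp
  then have vj: "poly_vert n j = Complex (- 1) 0"
    using poly_vert_opposite_even(1)[OF j] by (simp add: complex_eq_iff)
  have vj1: "poly_vert n (Suc j) = Complex (- (c\<^sup>2 - s\<^sup>2)) (- (2 * s * c))"
    using poly_vert_opposite_even(2)[OF j \<open>j > 0\<close>] unfolding poly_vert_1_eq c_def s_def
    by (simp add: complex_eq_iff)
  have v1: "poly_vert n 1 = Complex (c\<^sup>2 - s\<^sup>2) (2 * s * c)"
    unfolding poly_vert_1_eq c_def s_def ..
  have bound: "1 + 3 * c\<^sup>2 \<le> 4 * c\<^sup>2 + 4 * s\<^sup>2 * y\<^sup>2" if "1 / 2 \<le> y" for y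
  proof -
    have "(1 / 2)\<^sup>2 \<le> y\<^sup>2" using that by (intro power_mono) simp_all
    then have "s\<^sup>2 * (1 / 2)\<^sup>2 \<le> s\<^sup>2 * y\<^sup>2" by (intro mult_left_mono) simp_all
    moreover have "s\<^sup>2 * (1 / 2)\<^sup>2 = s\<^sup>2 / 4" by (simp add: power2_eq_square)
    ultimately show ?thesis using cs by linarith
  qed
  show ?thesis
  proof (cases "x \<le> 1 / 2")
    case True
    have "(2 - x + x * (c\<^sup>2 - s\<^sup>2))\<^sup>2 + (x * (2 * s * c))\<^sup>2 = 4 * c\<^sup>2 + 4 * s\<^sup>2 * (1 - x)\<^sup>2"
      using cs by algebra
    moreover have "of_real (1 - x) + of_real x * poly_vert n 1 - poly_vert n j
                   = Complex (2 - x + x * (c\<^sup>2 - s\<^sup>2)) (x * (2 * s * c))"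
      unfolding v1 vj by (simp add: complex_eq_iff)
    ultimately have "norm (of_real (1 - x) + of_real x * poly_vert n 1 - poly_vert n j)
               = sqrt (4 * c\<^sup>2 + 4 * s\<^sup>2 * (1 - x)\<^sup>2)"
      by (simp add: complex_norm)
    moreover have "sqrt (1 + 3 * c\<^sup>2) \<le> sqrt (4 * c\<^sup>2 + 4 * s\<^sup>2 * (1 - x)\<^sup>2)"
      using bound[of "1 - x"] True by (intro real_sqrt_le_mono) simp
    ultimately show ?thesis unfolding c_def by metis
  next
    case False
    have "(1 - x + (1 + x) * (c\<^sup>2 - s\<^sup>2))\<^sup>2 + ((1 + x) * (2 * s * c))\<^sup>2 = 4 * c\<^sup>2 + 4 * s\<^sup>2 * x\<^sup>2"
      using cs by algebra
    moreover have "of_real (1 - x) + of_real x * poly_vert n 1 - poly_vert n (Suc j)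
                   = Complex (1 - x + (1 + x) * (c\<^sup>2 - s\<^sup>2)) ((1 + x) * (2 * s * c))"
      unfolding v1 vj1 by (simp add: complex_eq_iff algebra_simps)
    ultimately have "norm (of_real (1 - x) + of_real x * poly_vert n 1 - poly_vert n (Suc j))
               = sqrt (4 * c\<^sup>2 + 4 * s\<^sup>2 * x\<^sup>2)"
      by (simp add: complex_norm)
    moreover have "sqrt (1 + 3 * c\<^sup>2) \<le> sqrt (4 * c\<^sup>2 + 4 * s\<^sup>2 * x\<^sup>2)"
      using bound[of x] False by (intro real_sqrt_le_mono) simp
    ultimately show ?thesis unfolding c_def by metis
  qed
qed

lemma exists_point_beyond_r_crit:
  assumes n: "n \<ge> 3" and q: "q \<in> Pn n"
  shows "\<exists>w\<in>Pn n. r_crit n \<le> norm (q - w)"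
proof -
  obtain K x where x: "0 \<le> x" "x \<le> 1"
    and q_eq: "q = poly_vert n K * (of_real (1 - x) + of_real x * poly_vert n 1)"
    using Pn_elim_side[OF q] .
  have vert: "poly_vert n (K + m) \<in> Pn n" for m using poly_vert_in_Pn[of n] n by simp
  have dist: "norm (q - poly_vert n (K + m)) = norm (of_real (1 - x) + of_real x * poly_vert n 1 - poly_vert n m)" for m
    unfolding q_eq by (rule norm_rotate_sub_poly_vert)
  obtain j where "n = 2 * j \<or> n = 2 * j + 1" by (metis odd_two_times_div_two_succ even_two_times_div_two)
  then show ?thesis
  proof
    assume j: "n = 2 * j"
    then obtain m where "sqrt (1 + 3 * (cos (pi / n))\<^sup>2) \<le> norm (q - poly_vert n (K + m))"
      using far_vertex_even[OF n j x] dist by metis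
    then have "r_crit n \<le> norm (q - poly_vert n (K + m))" using r_crit_le_even[OF n j] by linarith
    then show ?thesis using vert by blast
  next
    assume j: "n = 2 * j + 1"
    then have "r_crit n \<le> norm (q - poly_vert n (K + Suc j))"
      using r_crit_le_odd[OF n j] far_vertex_odd[OF n j x] dist[of "Suc j"] by linarith
    then show ?thesis using vert by blast
  qed
qed

lemma poly_pos_poly_vert:
  assumes "n \<ge> 3" and "k < n"
  shows "poly_pos n (poly_vert n k) = real k / real n"
  using poly_pos_poly_pt[OF assms(1), of "real k / real n"] poly_pt_vertex[of n k] assms by simp

theorem lemma5p4:
  fixes n :: nat and r :: real and v p :: complex
  assumes "n \<ge> 3" and "0 < r" and "r < r_crit n"
    and "v \<in> poly_vert n ` {..<n}" and "p \<in> Pn n"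
  shows "dP n v (g_map n r v) \<le> dP n p (g_map n r p)"
proof -
  note n = assms(1) and p = assms(5)
  have n0: "n > 0" using n by simp
  obtain k where k: "k < n" and v: "v = poly_vert n k" using assms(4) by auto
  have vP: "v \<in> Pn n" unfolding v using poly_vert_in_Pn[OF n0] .
  have r: "0 \<le> r" using assms(2) by simp
  have unit: "dP n u w \<in> {0..<1}" for u w by (simp add: dP_nonneg dP_less_1)
  obtain w where "w \<in> Pn n" "r_crit n \<le> norm (p - w)"
    using exists_point_beyond_r_crit[OF n p] by blast
  then have "r \<le> norm (p - poly_pt n (poly_pos n p + dP n p w))"
    using poly_pt_add_dP[OF n p] assms(3) by simp
  note gp = g_map_first_hit[OF n p r unit this]
  define t where "t = dP n p (g_map n r p)"
  have "r = norm (p - poly_pt n (poly_pos n p + t))"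
    using gp poly_pt_add_dP[OF n p] unfolding t_def by simp
  also have "\<dots> \<le> norm (1 - poly_pt n t)"
    using chord_le_chord_from_vertex[OF n0 _ dP_nonneg[of n p "g_map n r p"], of "poly_pos n p"]
      poly_pt_poly_pos[OF n p] poly_pos_range[OF n p]
    unfolding t_def by simp
  also have "\<dots> = norm (v - poly_pt n (poly_pos n v + t))"
    using chord_from_vertex[OF n0 dP_nonneg] poly_pos_poly_vert[OF n k] unfolding v t_def by simp
  finally show ?thesis using g_map_first_hit(3)[OF n vP r unit] unfolding t_def by blast
qed

end
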